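(* Consider the penalized scenario-based Value-at-Risk portfolio problem $\min_{\mathbf{w}\in\Delta}\ \phi(\mathbf{w}) := g(\mathbf{w}) - h(\mathbf{w})$ and the Boosted DC Algorithm (BDCA) with the line search, both as described in the context. Let $\{\mathbf{w}_k\}$ and $\{\mathbf{y}_k\}$ be the sequences generated by the BDCA, with $\mathbf{d}_k=\mathbf{y}_k-\mathbf{w}_k$ and step sizes $\lambda_k$. Then: (i) for all $k\ge 0$, $\phi(\mathbf{y}_k)\le \phi(\mathbf{w}_k)-\rho\,\|\mathbf{d}_k\|^2$; (ii) the line search (the choice of the initial $\lambda_k$ followed by the backtracking loop) terminates after finitely many steps, and $\phi(\mathbf{w}_{k+1})\le \phi(\mathbf{w}_k)-\rho\,\lambda_k^2\,\|\mathbf{d}_k\|^2$; (iii) the sequence $\{\phi(\mathbf{w}_k)\}$ is monotonically decreasing and converges to some $\bar\phi\in\mathbb{R}$; (iv) there exists a subsequence of $\{\mathbf{w}_k\}$ converging to a KKT point of the problem $\min_{\mathbf{w}\in\Delta}\phi(\mathbf{w})$.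
   Context: Data: $n,S\in\mathbb{N}$; scenario vectors $\mathbf{x}_1,\dots,\mathbf{x}_S\in\mathbb{R}^n$ with probabilities $p_1,\dots,p_S\in[0,1]$, $\sum_j p_j=1$. The feasible set is the simplex $\Delta=\{\mathbf{w}\in[0,1]^n:\sum_{i=1}^n w_i=1\}$. For $\mathbf{w}\in\mathbb{R}^n$ relabel the scenarios so that $\mathbf{w}^\top\mathbf{x}_1\le\cdots\le\mathbf{w}^\top\mathbf{x}_S$; for a level $a\in(0,1)$ let $k=\max\{k: \sum_{j=1}^k p_j< a\}$ (with $\max\emptyset=0$) and $\varepsilon=a-\sum_{j=1}^k p_j$, and define the discrete conditional value-at-risk $\mathrm{CVaR}_{X,a}(\mathbf{w})=\frac1a\sum_{j=1}^k p_j\,\mathbf{w}^\top\mathbf{x}_j+\frac{\varepsilon}{a}\,\mathbf{w}^\top\mathbf{x}_{k+1}$ (a concave piecewise linear function of $\mathbf{w}$). Fix $\alpha\in(0,1)$, with $k,\varepsilon$ the quantities above for level $\alpha$, a constant $\gamma$ with $0<\gamma<\varepsilon$, a threshold $r_{\min}\in\mathbb{R}$, a penalty parameter $\tau>0$, a regularization parameter $\rho>0$, and $\psi(\mathbf{w})=\frac{\rho}{2}\|\mathbf{w}\|^2$. Let $f(\mathbf{w})=-\sum_{j=1}^S p_j\,\mathbf{w}^\top\mathbf{x}_j$ and $g(\mathbf{w})=\psi(\mathbf{w})+f(\mathbf{w})+\tau\max\big[-\tfrac{\alpha}{\gamma}\mathrm{CVaR}_{X,\alpha}(\mathbf{w})+r_{\min},\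 -\tfrac{\alpha-\gamma}{\gamma}\mathrm{CVaR}_{X,\alpha-\gamma}(\mathbf{w})\big]$, $h(\mathbf{w})=\psi(\mathbf{w})-\tau\,\tfrac{\alpha-\gamma}{\gamma}\mathrm{CVaR}_{X,\alpha-\gamma}(\mathbf{w})$, and $\phi=g-h$ (both $g$ and $h$ are $\rho$-strongly convex). BDCA: input $\mathbf{w}_0\in\Delta$, $\tau,\rho>0$, $\beta\in(0,1)$. For $k=0,1,2,\dots$: choose $\mathbf{u}_k\in\partial h(\mathbf{w}_k)$ (convex subdifferential); let $\mathbf{y}_k=\arg\min_{\mathbf{w}\in\Delta}\{g(\mathbf{w})-\mathbf{w}^\top\mathbf{u}_k\}$ (unique by strong convexity); $\mathbf{d}_k=\mathbf{y}_k-\mathbf{w}_k$; if $\|\mathbf{d}_k\|=0$ stop; otherwise set $\lambda_k=\max\{\lambda: \mathbf{w}_k+\lambda\mathbf{d}_k\in\Delta\}$ and, while $\phi(\mathbf{w}_k+\lambda_k\mathbf{d}_k)>\phi(\mathbf{w}_k)-\rho\lambda_k^2\|\mathbf{d}_k\|^2$, replace $\lambda_k$ by $\max\{1,\beta\lambda_k\}$; then set $\mathbf{w}_{k+1}=\mathbf{w}_k+\lambda_k\mathbf{d}_k$. A point $\bar{\mathbf{w}}$ is a KKT point of $\min_{\mathbf{w}\in\Delta}\phi$ if there exist $\pi_1,\dots,\pi_n\ge0$ and $\nu\in\mathbb{R}$ with $\mathbf{0}\in\partial g(\bar{\mathbf{w}})-\partial h(\bar{\mathbf{w}})-\sum_{i=1}^n\pi_i\mathbf{e}_i+\nu\mathbf{1}_n$,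 $\pi_i\bar w_i=0$ and $\bar w_i\ge0$ for all $i$, and $\mathbf{1}_n^\top\bar{\mathbf{w}}=1$, where $\mathbf{e}_i$ are the standard basis vectors and $\mathbf{1}_n$ is the all-ones vector. *)

theory Defs
  imports "HOL-Analysis.Analysis"
begin

text \<open>Scenarios are indexed 0-based by j < S (paper: 1..S). Portfolio vectors live in real^'n.\<close>

definition port_simplex :: "(real^'n) set" where
  "port_simplex = {w. (\<forall>i. 0 \<le> w$i \<and> w$i \<le> 1) \<and> (\<Sum>i\<in>UNIV. w$i) = 1}"

definition sorting_perm :: "nat \<Rightarrow> (nat \<Rightarrow> real^'n) \<Rightarrow> real^'n \<Rightarrow> (nat \<Rightarrow> nat) \<Rightarrow> bool" where
  "sorting_perm S x w \<sigma> \<longleftrightarrow> bij_betw \<sigma> {..<S} {..<S} \<and>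
      (\<forall>i j. i \<le> j \<and> j < S \<longrightarrow> w \<bullet> x (\<sigma> i) \<le> w \<bullet> x (\<sigma> j))"

text \<open>k = max{k : sum of the first k relabelled probabilities < a} (k=0 always qualifies).\<close>
definition cut_index :: "nat \<Rightarrow> (nat \<Rightarrow> real) \<Rightarrow> (nat \<Rightarrow> nat) \<Rightarrow> real \<Rightarrow> nat" where
  "cut_index S p \<sigma> a = Max {k. k \<le> S \<and> (\<Sum>j<k. p (\<sigma> j)) < a}"

definition cut_eps :: "nat \<Rightarrow> (nat \<Rightarrow> real) \<Rightarrow> (nat \<Rightarrow> nat) \<Rightarrow> real \<Rightarrow> real" where
  "cut_eps S p \<sigma> a = a - (\<Sum>j<cut_index S p \<sigma> a. p (\<sigma> j))"

definition CVaR :: "nat \<Rightarrow> (nat \<Rightarrow> real^'n) \<Rightarrow> (nat \<Rightarrow> real) \<Rightarrow> real \<Rightarrow> real^'n \<Rightarrow> real" where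
  "CVaR S x p a w =
     (let \<sigma> = (SOME \<sigma>. sorting_perm S x w \<sigma>);
          k = cut_index S p \<sigma> a;
          e = cut_eps S p \<sigma> a
      in (1 / a) * (\<Sum>j<k. p (\<sigma> j) * (w \<bullet> x (\<sigma> j))) + (e / a) * (w \<bullet> x (\<sigma> k)))"

definition psi :: "real \<Rightarrow> real^'n \<Rightarrow> real" where
  "psi \<rho> w = \<rho> / 2 * (norm w)^2"

definition f_obj :: "nat \<Rightarrow> (nat \<Rightarrow> real^'n) \<Rightarrow> (nat \<Rightarrow> real) \<Rightarrow> real^'n \<Rightarrow> real" where
  "f_obj S x p w = - (\<Sum>j<S. p j * (w \<bullet> x j))"

definition g_dc :: "nat \<Rightarrow> (nat \<Rightarrow> real^'n) \<Rightarrow> (nat \<Rightarrow> real) \<Rightarrow> real \<Rightarrow> real \<Rightarrow> real \<Rightarrow> real \<Rightarrow> real \<Rightarrow> real^'n \<Rightarrow> real" where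
  "g_dc S x p \<alpha> \<gamma> rmin \<tau> \<rho> w =
     psi \<rho> w + f_obj S x p w
     + \<tau> * max (- (\<alpha> / \<gamma>) * CVaR S x p \<alpha> w + rmin)
                (- ((\<alpha> - \<gamma>) / \<gamma>) * CVaR S x p (\<alpha> - \<gamma>) w)"

definition h_dc :: "nat \<Rightarrow> (nat \<Rightarrow> real^'n) \<Rightarrow> (nat \<Rightarrow> real) \<Rightarrow> real \<Rightarrow> real \<Rightarrow> real \<Rightarrow> real \<Rightarrow> real^'n \<Rightarrow> real" where
  "h_dc S x p \<alpha> \<gamma> \<tau> \<rho> w = psi \<rho> w - \<tau> * ((\<alpha> - \<gamma>) / \<gamma>) * CVaR S x p (\<alpha> - \<gamma>) w"

definition subdiff :: "(real^'n \<Rightarrow> real) \<Rightarrow> real^'n \<Rightarrow> (real^'n) set" where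
  "subdiff F w = {u. \<forall>v. F w + u \<bullet> (v - w) \<le> F v}"

definition ls_init :: "real^'n \<Rightarrow> real^'n \<Rightarrow> real" where
  "ls_init w d = (GREATEST l. w + l *\<^sub>R d \<in> port_simplex)"

text \<open>Value of lambda after m backtracking steps lambda := max{1, beta*lambda}.\<close>
definition ls_iter :: "real \<Rightarrow> real \<Rightarrow> nat \<Rightarrow> real" where
  "ls_iter \<beta> l0 m = ((\<lambda>l. max 1 (\<beta> * l)) ^^ m) l0"

definition is_KKT :: "(real^'n \<Rightarrow> real) \<Rightarrow> (real^'n \<Rightarrow> real) \<Rightarrow> real^'n \<Rightarrow> bool" where
  "is_KKT G H wb \<longleftrightarrow> (\<exists>\<xi> \<zeta> (\<pi>::real^'n) (\<nu>::real).
      \<xi> \<in> subdiff G wb \<and> \<zeta> \<in> subdiff H wb \<and>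
      \<xi> - \<zeta> - \<pi> + \<nu> *\<^sub>R (\<chi> i. 1) = 0 \<and>
      (\<forall>i. 0 \<le> \<pi>$i \<and> \<pi>$i * wb$i = 0 \<and> 0 \<le> wb$i) \<and>
      (\<Sum>i\<in>UNIV. wb$i) = 1)"

end

theory Submission
  imports Defs
begin

text \<open>CVaR is concave: for a fixed relabelling of the scenarios the CVaR formula is linear in \<open>w\<close>,
  and the relabelling that sorts the outcomes \<open>w \<bullet> x\<^sub>j\<close> minimises it, because putting the tail
  weights on the smallest outcomes is the greedy optimum. Hence \<open>g\<close> and \<open>h\<close> are \<open>\<psi>\<close> plus convex
  functions, i.e. \<open>\<rho>\<close>-strongly convex. So \<open>y\<^sub>k\<close> beats \<open>w\<^sub>k\<close> in the convexified subproblem by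
  \<open>\<rho>/2 \<parallel>d\<^sub>k\<parallel>\<^sup>2\<close>, and the linearisation of \<open>h\<close> at \<open>w\<^sub>k\<close> underestimates \<open>h(y\<^sub>k)\<close> by as much;
  together this is (i). The backtracking never goes below \<open>\<lambda> = 1\<close>, where the Armijo test holds
  by (i); this gives (ii) and a decrease of at least \<open>\<rho> \<parallel>d\<^sub>k\<parallel>\<^sup>2\<close> per step, so \<open>\<phi>(w\<^sub>k)\<close>, which is
  bounded below on the compact simplex, converges and \<open>d\<^sub>k \<rightarrow> 0\<close>. The subgradients \<open>u\<^sub>k\<close> stay
  bounded, so a subsequence of \<open>(w\<^sub>k, u\<^sub>k)\<close> converges to some \<open>(w, u)\<close>; in the limit \<open>u \<in> \<partial>h(w)\<close>
  and \<open>w\<close> solves its own subproblem, whose KKT multipliers come from separating the epigraph of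
  its objective from the simplex.\<close>

section \<open>The simplex\<close>

lemma convex_port_simplex: "convex port_simplex"
proof (rule convexI)
  fix v w :: "real^'n" and a b :: real
  assume "v \<in> port_simplex" "w \<in> port_simplex" "0 \<le> a" "0 \<le> b" "a + b = 1"
  then show "a *\<^sub>R v + b *\<^sub>R w \<in> port_simplex"
    unfolding port_simplex_def
    by (auto simp: sum.distrib simp flip: sum_distrib_left intro: convex_bound_le)
qed

lemma closed_port_simplex: "closed (port_simplex :: (real^'n) set)"
  unfolding port_simplex_def
  by (intro closed_Collect_all closed_Collect_conj closed_Collect_le closed_Collect_eq continuous_intros)

lemma compact_port_simplex: "compact (port_simplex :: (real^'n) set)"
proof -
  have "port_simplex \<subseteq> cbox (0::real^'n) 1"
    unfolding port_simplex_def by (auto simp: mem_box_cart)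
  then show ?thesis
    using closed_port_simplex bounded_subset[OF bounded_cbox] compact_eq_bounded_closed by blast
qed

lemma axis_in_port_simplex: "axis i 1 \<in> (port_simplex :: (real^'n) set)"
  unfolding port_simplex_def by (auto simp: axis_def)

lemma norm_le_1_if_port_simplex:
  assumes "v \<in> port_simplex"
  shows "norm v \<le> 1"
proof -
  have "(\<Sum>i\<in>UNIV. \<bar>v$i\<bar>) = (\<Sum>i\<in>UNIV. v$i)"
    using assms by (intro sum.cong) (auto simp: port_simplex_def)
  then show ?thesis
    using norm_le_l1_cart[of v] assms by (simp add: port_simplex_def)
qed

lemma convex_step_shorten:
  assumes "convex K" "w \<in> K" "w + l0 *\<^sub>R d \<in> K" "0 \<le> l" "l \<le> l0"
  shows "w + l *\<^sub>R d \<in> K"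
proof (cases "l0 = 0")
  case True
  then show ?thesis using assms by simp
next
  case False
  then have "w + l *\<^sub>R d = (1 - l / l0) *\<^sub>R w + (l / l0) *\<^sub>R (w + l0 *\<^sub>R d)"
    by (simp add: algebra_simps)
  also have "\<dots> \<in> K"
    using assms False by (intro convexD_alt) (auto simp: field_simps)
  finally show ?thesis .
qed

section \<open>Convex and strongly convex functions\<close>

lemma convex_on_max:
  assumes "convex_on S f" "convex_on S g"
  shows "convex_on S (\<lambda>x. max (f x) (g x))"
proof -
  have "epigraph S (\<lambda>x. max (f x) (g x)) = epigraph S f \<inter> epigraph S g"
    by (auto simp: epigraph_def)
  then show ?thesis
    using assms by (simp flip: convex_epigraph add: convex_Int)
qed

lemma convex_on_cmul_concave:
  fixes c :: real
  assumes "concave_on S f" "c \<le> 0"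
  shows "convex_on S (\<lambda>x. c * f x)"
  using convex_on_cmul[of "- c" S "\<lambda>x. - f x"] assms by (simp add: concave_on_def)

lemma convex_on_inner_left: "convex_on UNIV (\<lambda>v. v \<bullet> c)"
  by (rule convex_onI) (auto simp: inner_add_left)

lemma convex_on_norm_power2: "convex_on UNIV (\<lambda>v::'a::real_inner. (norm v)\<^sup>2)"
proof (rule convex_onI)
  fix t :: real and v w :: 'a
  assume t: "0 < t" "t < 1"
  have "(norm ((1 - t) *\<^sub>R v + t *\<^sub>R w))\<^sup>2
      = (1 - t) * (norm v)\<^sup>2 + t * (norm w)\<^sup>2 - t * (1 - t) * (norm (v - w))\<^sup>2"
    unfolding power2_norm_eq_inner by (simp add: inner_commute algebra_simps)
  then show "(norm ((1 - t) *\<^sub>R v + t *\<^sub>R w))\<^sup>2 \<le> (1 - t) * (norm v)\<^sup>2 + t * (norm w)\<^sup>2"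
    using t by simp
qed simp

definition strongly_convex :: "real \<Rightarrow> ('a::real_inner \<Rightarrow> real) \<Rightarrow> bool" where
  "strongly_convex \<rho> F \<longleftrightarrow> convex_on UNIV (\<lambda>v. F v - \<rho> / 2 * (norm v)\<^sup>2)"

lemma strongly_convex_imp_convex_on:
  assumes "0 \<le> \<rho>" "strongly_convex \<rho> F"
  shows "convex_on UNIV F"
proof -
  have "convex_on UNIV (\<lambda>v. (F v - \<rho> / 2 * (norm v)\<^sup>2) + \<rho> / 2 * (norm v)\<^sup>2)"
    using assms convex_on_norm_power2 unfolding strongly_convex_def by (intro convex_on_add convex_on_cmul) auto
  then show ?thesis by simp
qed

lemma strongly_convex_add_inner:
  assumes "strongly_convex \<rho> F"
  shows "strongly_convex \<rho> (\<lambda>v. F v + v \<bullet> c)"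
proof -
  have "convex_on UNIV (\<lambda>v. (F v - \<rho> / 2 * (norm v)\<^sup>2) + v \<bullet> c)"
    using assms convex_on_inner_left unfolding strongly_convex_def by (rule convex_on_add)
  then show ?thesis unfolding strongly_convex_def by (simp add: algebra_simps)
qed

lemma strongly_convex_continuous_on:
  fixes F :: "'a::euclidean_space \<Rightarrow> real"
  assumes "strongly_convex \<rho> F"
  shows "continuous_on UNIV F"
proof -
  have "continuous_on UNIV (\<lambda>v. (F v - \<rho> / 2 * (norm v)\<^sup>2) + \<rho> / 2 * (norm v)\<^sup>2)"
    using assms unfolding strongly_convex_def
    by (intro continuous_intros convex_on_continuous) auto
  then show ?thesis by simp
qed

text \<open>The quadratic term survives the limit \<open>t \<rightarrow> 0\<close> of the first-order condition at \<open>y\<close>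
  along the segment towards \<open>w\<close>.\<close>
lemma strongly_convex_growth:
  fixes F :: "'a::real_inner \<Rightarrow> real"
  assumes F: "strongly_convex \<rho> F"
    and slope: "\<And>t. 0 < t \<Longrightarrow> t \<le> 1 \<Longrightarrow> F y + t * l \<le> F (y + t *\<^sub>R (w - y))"
  shows "F y + l + \<rho> / 2 * (norm (w - y))\<^sup>2 \<le> F w"
proof -
  define C where "C v = F v - \<rho> / 2 * (norm v)\<^sup>2" for v
  define d where "d = w - y"
  define A where "A = l + \<rho> / 2 * (norm d)\<^sup>2 - (F w - F y)"
  define B where "B = \<rho> / 2 * (norm d)\<^sup>2"
  have bound: "A \<le> t * B" if t: "0 < t" "t \<le> 1" for t
  proof -
    have "y + t *\<^sub>R d = (1 - t) *\<^sub>R y + t *\<^sub>R w"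
      by (simp add: d_def algebra_simps)
    then have C_le: "C (y + t *\<^sub>R d) \<le> (1 - t) * C y + t * C w"
      using convex_onD[OF F[unfolded strongly_convex_def], of t y w] t by (simp add: C_def)
    have norms: "(norm (y + t *\<^sub>R d))\<^sup>2 = (norm y)\<^sup>2 + 2 * t * (y \<bullet> d) + t\<^sup>2 * (norm d)\<^sup>2"
      "(norm w)\<^sup>2 = (norm y)\<^sup>2 + 2 * (y \<bullet> d) + (norm d)\<^sup>2"
      unfolding power2_norm_eq_inner d_def by (simp_all add: inner_commute algebra_simps power2_eq_square)
    have "F y + t * l \<le> F (y + t *\<^sub>R d)"
      using slope[OF t] by (simp add: d_def)
    also have "\<dots> \<le> (1 - t) * C y + t * C w + \<rho> / 2 * (norm (y + t *\<^sub>R d))\<^sup>2"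
      using C_le by (simp add: C_def)
    finally have "F y + t * l \<le> (1 - t) * C y + t * C w + \<rho> / 2 * (norm (y + t *\<^sub>R d))\<^sup>2" .
    moreover have "t * A - t * (t * B)
        = (F y + t * l) - ((1 - t) * C y + t * C w + \<rho> / 2 * (norm (y + t *\<^sub>R d))\<^sup>2)"
      unfolding A_def B_def C_def norms by (simp add: field_simps power2_eq_square)
    ultimately have "t * A \<le> t * (t * B)" by linarith
    then show ?thesis using t by simp
  qed
  have "((\<lambda>t. t * B) \<longlongrightarrow> 0 * B) (at_right 0)"
    by (intro tendsto_intros)
  moreover have "\<forall>\<^sub>F t in at_right 0. A \<le> t * B"
    by (rule eventually_at_rightI[of 0 1]) (auto intro: bound)
  ultimately have "A \<le> 0"
    using tendsto_lowerbound by fastforce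
  then show ?thesis unfolding A_def d_def by simp
qed

lemma strongly_convex_subdiff_growth:
  fixes F :: "real^'n \<Rightarrow> real"
  assumes "strongly_convex \<rho> F" "u \<in> subdiff F w"
  shows "F w + u \<bullet> (v - w) + \<rho> / 2 * (norm (v - w))\<^sup>2 \<le> F v"
proof (rule strongly_convex_growth[OF assms(1)])
  fix t :: real
  have "F w + u \<bullet> ((w + t *\<^sub>R (v - w)) - w) \<le> F (w + t *\<^sub>R (v - w))"
    using assms(2) unfolding subdiff_def by blast
  then show "F w + t * (u \<bullet> (v - w)) \<le> F (w + t *\<^sub>R (v - w))" by simp
qed

lemma strongly_convex_argmin_growth:
  assumes "strongly_convex \<rho> F" "convex K" "y \<in> K" "w \<in> K" "\<And>v. v \<in> K \<Longrightarrow> F y \<le> F v"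
  shows "F y + \<rho> / 2 * (norm (w - y))\<^sup>2 \<le> F w"
proof -
  have "y + t *\<^sub>R (w - y) \<in> K" if "0 < t" "t \<le> 1" for t
    using convex_step_shorten[of K y 1 "w - y" t] assms(2-4) that by simp
  then show ?thesis
    using strongly_convex_growth[OF assms(1), of y 0 w] assms(5) by simp
qed

section \<open>Multipliers\<close>

text \<open>Since \<open>F\<close> is finite on the whole space, a hyperplane separating its epigraph from the
  cylinder below a minimum over \<open>K\<close> cannot be vertical.\<close>
lemma epigraph_cylinder_separation:
  fixes F :: "'a::euclidean_space \<Rightarrow> real"
  assumes F: "convex_on UNIV F" and K: "convex K" and z: "z \<in> K"
    and min: "\<And>v. v \<in> K \<Longrightarrow> F z \<le> F v"
  obtains a \<beta> b where "\<beta> < 0" and "\<And>v t. F v \<le> t \<Longrightarrow> a \<bullet> v + \<beta> * t \<le> b"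
    and "\<And>v t. v \<in> K \<Longrightarrow> t < F z \<Longrightarrow> b \<le> a \<bullet> v + \<beta> * t"
proof -
  have "convex (epigraph UNIV F)" using F by (rule convex_epigraphI)
  moreover have "convex (K \<times> {..<F z})" using K by (intro convex_Times convex_real_interval)
  moreover have "(z, F z) \<in> epigraph UNIV F" by (simp add: mem_epigraph)
  moreover have "(z, F z - 1) \<in> K \<times> {..<F z}" using z by simp
  moreover have "epigraph UNIV F \<inter> (K \<times> {..<F z}) = {}"
    using min by (force simp: epigraph_def)
  ultimately obtain A b where "A \<noteq> 0" and epi: "\<forall>q\<in>epigraph UNIV F. A \<bullet> q \<le> b"
    and cyl: "\<forall>q\<in>K \<times> {..<F z}. b \<le> A \<bullet> q"
    using separating_hyperplane_sets[of "epigraph UNIV F" "K \<times> {..<F z}"] by blast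
  obtain a \<beta> where A: "A = (a, \<beta>)" by (cases A)
  have epi': "a \<bullet> v + \<beta> * t \<le> b" if "F v \<le> t" for v t
    using epi[rule_format, of "(v, t)"] that by (simp add: A mem_epigraph)
  have cyl': "b \<le> a \<bullet> v + \<beta> * t" if "v \<in> K" "t < F z" for v t
    using cyl[rule_format, of "(v, t)"] that by (simp add: A)
  have "\<beta> \<le> 0"
    using epi'[of z "F z"] cyl'[OF z, of "F z - 1"] by (simp add: algebra_simps)
  moreover have "\<beta> \<noteq> 0"
  proof
    assume \<beta>: "\<beta> = 0"
    have a_bound: "a \<bullet> v \<le> b" for v
      using epi'[of v "F v"] \<beta> by simp
    have "a = 0"
    proof (rule ccontr)
      assume "a \<noteq> 0"
      then have "a \<bullet> (((\<bar>b\<bar> + 1) / (a \<bullet> a)) *\<^sub>R a) = \<bar>b\<bar> + 1" by simp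
      moreover have "a \<bullet> (((\<bar>b\<bar> + 1) / (a \<bullet> a)) *\<^sub>R a) \<le> b" by (rule a_bound)
      ultimately show False by linarith
    qed
    with \<open>A \<noteq> 0\<close> \<beta> show False by (simp add: A zero_prod_def)
  qed
  ultimately have "\<beta> < 0" by simp
  then show thesis using epi' cyl' by (rule that)
qed

lemma convex_argmin_subgradient_normal:
  fixes F :: "'a::euclidean_space \<Rightarrow> real"
  assumes "convex_on UNIV F" "convex K" "z \<in> K" "\<And>v. v \<in> K \<Longrightarrow> F z \<le> F v"
  obtains \<eta> where "\<And>v. F z + \<eta> \<bullet> (v - z) \<le> F v" and "\<And>v. v \<in> K \<Longrightarrow> 0 \<le> \<eta> \<bullet> (v - z)"
proof (rule epigraph_cylinder_separation[OF assms])
  fix a \<beta> b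
  assume \<beta>: "\<beta> < 0" and epi: "\<And>v t. F v \<le> t \<Longrightarrow> a \<bullet> v + \<beta> * t \<le> b"
    and cyl: "\<And>v t. v \<in> K \<Longrightarrow> t < F z \<Longrightarrow> b \<le> a \<bullet> v + \<beta> * t"
  have cyl_lim: "b \<le> a \<bullet> v + \<beta> * F z" if v: "v \<in> K" for v
  proof -
    have "t \<le> (a \<bullet> v - b) / - \<beta>" if "t < F z" for t
      using cyl[OF v that] \<beta> by (simp add: field_simps)
    then have "F z \<le> (a \<bullet> v - b) / - \<beta>" by (rule dense_le)
    then show ?thesis using \<beta> by (simp add: field_simps)
  qed
  show thesis
  proof (rule that[of "(- 1 / \<beta>) *\<^sub>R a"])
    fix v
    have "a \<bullet> (v - z) \<le> - \<beta> * (F v - F z)"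
      using epi[of v "F v"] cyl_lim[OF assms(3)] by (simp add: inner_diff_right algebra_simps)
    then show "F z + ((- 1 / \<beta>) *\<^sub>R a) \<bullet> (v - z) \<le> F v"
      using \<beta> by (simp add: field_simps)
  next
    fix v assume "v \<in> K"
    then have "0 \<le> a \<bullet> (v - z)"
      using epi[of z "F z"] cyl_lim[of v] by (simp add: inner_diff_right)
    then show "0 \<le> ((- 1 / \<beta>) *\<^sub>R a) \<bullet> (v - z)"
      using \<beta> by (simp add: divide_nonneg_neg)
  qed
qed

text \<open>The normal cone of the simplex at \<open>z\<close>: \<open>-\<nu>\<close> is the smallest coordinate of \<open>\<eta>\<close>, which
  can exceed \<open>\<eta>$i\<close> only where \<open>z$i = 0\<close>.\<close>
lemma port_simplex_normal_cone:
  fixes \<eta> z :: "real^'n"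
  assumes z: "z \<in> port_simplex" and normal: "\<And>v. v \<in> port_simplex \<Longrightarrow> 0 \<le> \<eta> \<bullet> (v - z)"
  obtains \<pi> \<nu> where "\<eta> - \<pi> + \<nu> *\<^sub>R (\<chi> i. 1) = 0" and "\<And>i. 0 \<le> \<pi>$i \<and> \<pi>$i * z$i = 0"
proof -
  define m where "m = Min (range (\<lambda>i. \<eta>$i))"
  have m_le: "m \<le> \<eta>$i" for i
    unfolding m_def by (rule Min_le) auto
  have "m \<in> range (\<lambda>i. \<eta>$i)"
    unfolding m_def by (rule Min_in) auto
  then obtain i0 where i0: "\<eta>$i0 = m" by auto
  have z_nonneg: "0 \<le> z$i" and z_sum: "(\<Sum>i\<in>UNIV. z$i) = 1" for i
    using z by (auto simp: port_simplex_def)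
  have "\<eta> \<bullet> z \<le> m"
    using normal[OF axis_in_port_simplex[of i0]] i0 by (simp add: inner_diff_right inner_axis)
  then have "(\<Sum>i\<in>UNIV. (\<eta>$i - m) * z$i) \<le> 0"
    using z_sum by (simp add: inner_vec_def algebra_simps sum_subtractf flip: sum_distrib_left)
  moreover have nonneg: "0 \<le> (\<eta>$i - m) * z$i" for i
    using m_le z_nonneg by simp
  ultimately have "(\<eta>$i - m) * z$i = 0" for i
    using sum_nonneg_eq_0_iff[of UNIV "\<lambda>i. (\<eta>$i - m) * z$i"] by (simp add: antisym sum_nonneg)
  then show thesis
    using m_le by (intro that[of "\<chi> i. \<eta>$i - m" "- m"]) (auto simp: vec_eq_iff)
qed

lemma is_KKT_if_subproblem_argmin:
  fixes G H :: "real^'n \<Rightarrow> real"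
  assumes G: "convex_on UNIV G" and u: "u \<in> subdiff H z" and z: "z \<in> port_simplex"
    and min: "\<And>v. v \<in> port_simplex \<Longrightarrow> G z - z \<bullet> u \<le> G v - v \<bullet> u"
  shows "is_KKT G H z"
proof -
  have "convex_on UNIV (\<lambda>v. G v + v \<bullet> (- u))"
    using G convex_on_inner_left by (rule convex_on_add)
  then obtain \<eta> where \<eta>: "\<And>v. G z + z \<bullet> (- u) + \<eta> \<bullet> (v - z) \<le> G v + v \<bullet> (- u)"
    and normal: "\<And>v. v \<in> port_simplex \<Longrightarrow> 0 \<le> \<eta> \<bullet> (v - z)"
    using convex_argmin_subgradient_normal[OF _ convex_port_simplex z, of "\<lambda>v. G v + v \<bullet> (- u)"] min
    by auto
  obtain \<pi> \<nu> where "\<eta> - \<pi> + \<nu> *\<^sub>R (\<chi> i. 1) = 0" and "\<And>i. 0 \<le> \<pi>$i \<and> \<pi>$i * z$i = 0"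
    using port_simplex_normal_cone[OF z normal] by blast
  moreover have "\<eta> + u \<in> subdiff G z"
    using \<eta> by (simp add: subdiff_def inner_commute algebra_simps)
  ultimately show ?thesis
    unfolding is_KKT_def using u z
    by (intro exI[of _ "\<eta> + u"] exI[of _ u] exI[of _ \<pi>] exI[of _ \<nu>]) (auto simp: port_simplex_def)
qed

lemma norm_subdiff_le:
  assumes u: "u \<in> subdiff F w" and bound: "\<And>v. v \<in> cball w 1 \<Longrightarrow> \<bar>F v\<bar> \<le> M"
  shows "norm u \<le> 2 * M"
proof (cases "u = 0")
  case True
  then show ?thesis using bound[of w] by simp
next
  case False
  define v where "v = w + (1 / norm u) *\<^sub>R u"
  have "v \<in> cball w 1" using False by (simp add: v_def dist_norm)
  moreover have "F w + u \<bullet> (v - w) \<le> F v" using u by (simp add: subdiff_def)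
  moreover have "u \<bullet> (v - w) = norm u"
    using False by (simp add: v_def dot_square_norm power2_eq_square)
  ultimately show ?thesis using bound[of v] bound[of w] by fastforce
qed

section \<open>The line search\<close>

lemma ls_init_feasible:
  fixes w y :: "real^'n"
  assumes w: "w \<in> port_simplex" and y: "y \<in> port_simplex" and ne: "y \<noteq> w"
  shows "w + ls_init w (y - w) *\<^sub>R (y - w) \<in> port_simplex" and "1 \<le> ls_init w (y - w)"
proof -
  define L where "L = {l. w + l *\<^sub>R (y - w) \<in> port_simplex}"
  have "closed L"
    unfolding L_def using continuous_closed_vimage[OF closed_port_simplex, of "\<lambda>l. w + l *\<^sub>R (y - w)"]
    by (simp add: vimage_def continuous_intros)
  have "1 \<in> L" using y by (simp add: L_def)
  have "(\<Sum>i\<in>UNIV. (y - w)$i) = 0"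
    using w y by (simp add: port_simplex_def sum_subtractf)
  moreover have "y - w \<noteq> 0" using ne by simp
  ultimately obtain i where i: "(y - w)$i < 0"
    using sum_nonneg_eq_0_iff[of UNIV "\<lambda>i. (y - w)$i"] by (force simp: vec_eq_iff not_less)
  have "bdd_above L"
  proof (rule bdd_aboveI)
    fix l assume "l \<in> L"
    then have "0 \<le> w$i + l * (y - w)$i" by (simp add: L_def port_simplex_def)
    then show "l \<le> - w$i / (y - w)$i" using i by (simp add: field_simps)
  qed
  have "Sup L \<in> L"
    using closed_contains_Sup[OF _ \<open>bdd_above L\<close> \<open>closed L\<close>] \<open>1 \<in> L\<close> by blast
  moreover have "ls_init w (y - w) = Sup L"
    unfolding ls_init_def
    by (rule Greatest_equality) (use \<open>Sup L \<in> L\<close> cSup_upper[OF _ \<open>bdd_above L\<close>] in \<open>auto simp: L_def\<close>)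
  ultimately show "w + ls_init w (y - w) *\<^sub>R (y - w) \<in> port_simplex" and "1 \<le> ls_init w (y - w)"
    using cSup_upper[OF \<open>1 \<in> L\<close> \<open>bdd_above L\<close>] by (auto simp: L_def)
qed

lemma ls_iter_eq:
  assumes "0 \<le> \<beta>" "\<beta> \<le> 1" "1 \<le> l0"
  shows "ls_iter \<beta> l0 m = max 1 (\<beta> ^ m * l0)"
proof (induction m)
  case 0
  then show ?case using assms by (simp add: ls_iter_def)
next
  case (Suc m)
  have "\<beta> * max 1 (\<beta> ^ m * l0) = max \<beta> (\<beta> ^ Suc m * l0)"
    using assms by (simp add: max_mult_distrib_left mult.assoc)
  then show ?case
    using Suc assms by (simp add: ls_iter_def max.assoc[symmetric] max.absorb1)
qed

lemma ls_iter_bounds: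
  assumes "0 \<le> \<beta>" "\<beta> \<le> 1" "1 \<le> l0"
  shows "1 \<le> ls_iter \<beta> l0 m" and "ls_iter \<beta> l0 m \<le> l0"
  using ls_iter_eq[OF assms] assms by (auto simp: mult_left_le_one_le power_le_one)

lemma ls_iter_reaches_1:
  assumes "0 < \<beta>" "\<beta> < 1" "1 \<le> l0"
  obtains m where "ls_iter \<beta> l0 m = 1"
proof -
  obtain m where "\<beta> ^ m < 1 / l0"
    using real_arch_pow_inv[of "1 / l0" \<beta>] assms by auto
  then have "\<beta> ^ m * l0 < 1" using assms by (simp add: field_simps)
  then show thesis
    using that[of m] ls_iter_eq[of \<beta> l0 m] assms by simp
qed

section \<open>Concavity of CVaR\<close>

lemma sorting_perm_exists: "\<exists>\<sigma>. sorting_perm S x v \<sigma>"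
proof -
  define l where "l = sort_key (\<lambda>j. v \<bullet> x j) [0..<S]"
  have "distinct l" "set l = {..<S}" "length l = S"
    by (auto simp: l_def)
  then have "bij_betw ((!) l) {..<S} {..<S}"
    using bij_betw_nth by fastforce
  moreover have "sorted (map (\<lambda>j. v \<bullet> x j) l)"
    by (simp add: l_def sorted_sort_key)
  then have "v \<bullet> x (l ! i) \<le> v \<bullet> x (l ! j)" if "i \<le> j" "j < S" for i j
    using sorted_nth_mono[of "map (\<lambda>j. v \<bullet> x j) l" i j] that \<open>length l = S\<close> by auto
  ultimately show ?thesis
    unfolding sorting_perm_def by blast
qed

lemma sorting_perm_bij: "sorting_perm S x v \<sigma> \<Longrightarrow> bij_betw \<sigma> {..<S} {..<S}"
  by (simp add: sorting_perm_def)

lemma sorting_perm_some: "sorting_perm S x v (SOME \<sigma>. sorting_perm S x v \<sigma>)"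
  using sorting_perm_exists by (rule someI_ex)

text \<open>Exchange argument: \<open>R - Q\<close> has total zero, is nonpositive below \<open>k\<close> and nonnegative above
  it, so it only moves weight towards larger values of \<open>c\<close>.\<close>
lemma greedy_weighted_sum_le:
  fixes c Q R P :: "nat \<Rightarrow> real" and k :: nat
  assumes mono: "\<And>i j. i \<le> j \<Longrightarrow> j < S \<Longrightarrow> c i \<le> c j" and k: "k < S"
    and Q_below: "\<And>j. j < k \<Longrightarrow> Q j = P j" and Q_above: "\<And>j. k < j \<Longrightarrow> j < S \<Longrightarrow> Q j = 0"
    and R: "\<And>j. j < S \<Longrightarrow> 0 \<le> R j \<and> R j \<le> P j"
    and sums: "(\<Sum>j<S. R j) = (\<Sum>j<S. Q j)"
  shows "(\<Sum>j<S. Q j * c j) \<le> (\<Sum>j<S. R j * c j)"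
proof -
  have "(R j - Q j) * c k \<le> (R j - Q j) * c j" if j: "j < S" for j
  proof (cases j k rule: linorder_cases)
    case less
    then show ?thesis using Q_below R j mono k by (simp add: mult_left_mono_neg)
  next
    case greater
    then show ?thesis using Q_above R j mono k by (simp add: mult_left_mono)
  qed simp
  then have "(\<Sum>j<S. (R j - Q j) * c k) \<le> (\<Sum>j<S. (R j - Q j) * c j)"
    by (intro sum_mono) auto
  moreover have "(\<Sum>j<S. (R j - Q j) * c k) = 0"
    using sums by (simp add: sum_subtractf flip: sum_distrib_right)
  ultimately show ?thesis
    by (simp add: algebra_simps sum_subtractf)
qed

lemma sum_reindex_bij_pair:
  assumes \<sigma>: "bij_betw \<sigma> {..<S} {..<S}" and \<tau>: "bij_betw \<tau> {..<S} {..<S}"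
  shows "(\<Sum>j<S. f j (\<tau> j)) = (\<Sum>j<S. f (inv_into {..<S} \<tau> (\<sigma> j)) (\<sigma> j))"
proof -
  let ?\<iota> = "inv_into {..<S} \<tau>"
  have "(\<Sum>j<S. f j (\<tau> j)) = (\<Sum>j<S. f (?\<iota> (\<tau> j)) (\<tau> j))"
    by (rule sum.cong) (simp_all add: bij_betw_inv_into_left[OF \<tau>])
  also have "\<dots> = (\<Sum>i<S. f (?\<iota> i) i)"
    using sum.reindex_bij_betw[OF \<tau>, of "\<lambda>i. f (?\<iota> i) i"] .
  also have "\<dots> = (\<Sum>j<S. f (?\<iota> (\<sigma> j)) (\<sigma> j))"
    using sum.reindex_bij_betw[OF \<sigma>, of "\<lambda>i. f (?\<iota> i) i"] by simp
  finally show ?thesis .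
qed

text \<open>The weights of the CVaR formula on the relabelled scenarios, 0-based: \<open>p\<close> before the cut
  index \<open>k\<close>, \<open>\<epsilon>\<close> at \<open>k\<close> (the paper's \<open>k+1\<close>), and nothing after it.\<close>
definition tail_weight :: "nat \<Rightarrow> (nat \<Rightarrow> real) \<Rightarrow> (nat \<Rightarrow> nat) \<Rightarrow> real \<Rightarrow> nat \<Rightarrow> real" where
  "tail_weight S p \<sigma> a j =
     (if j < cut_index S p \<sigma> a then p (\<sigma> j)
      else if j = cut_index S p \<sigma> a then cut_eps S p \<sigma> a else 0)"

definition CVaR_perm ::
  "nat \<Rightarrow> (nat \<Rightarrow> real^'n) \<Rightarrow> (nat \<Rightarrow> real) \<Rightarrow> (nat \<Rightarrow> nat) \<Rightarrow> real \<Rightarrow> real^'n \<Rightarrow> real" where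
  "CVaR_perm S x p \<sigma> a v = 1 / a * (\<Sum>j<S. tail_weight S p \<sigma> a j * (v \<bullet> x (\<sigma> j)))"

lemma CVaR_perm_combination:
  "CVaR_perm S x p \<sigma> a (s *\<^sub>R v + t *\<^sub>R w) = s * CVaR_perm S x p \<sigma> a v + t * CVaR_perm S x p \<sigma> a w"
  by (simp add: CVaR_perm_def inner_add_left sum.distrib sum_distrib_left algebra_simps)

context
  fixes S :: nat and p :: "nat \<Rightarrow> real" and \<sigma> :: "nat \<Rightarrow> nat" and a :: real
  assumes p_nonneg: "\<forall>j<S. 0 \<le> p j" and p_sum: "(\<Sum>j<S. p j) = 1"
    and \<sigma>: "bij_betw \<sigma> {..<S} {..<S}" and a: "0 < a" "a < 1"
begin

lemma cut_index_bounds: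
  shows "cut_index S p \<sigma> a < S" and "(\<Sum>j<cut_index S p \<sigma> a. p (\<sigma> j)) < a"
    and "a \<le> (\<Sum>j<Suc (cut_index S p \<sigma> a). p (\<sigma> j))"
proof -
  define K where "K = {k. k \<le> S \<and> (\<Sum>j<k. p (\<sigma> j)) < a}"
  have "finite K" by (rule finite_subset[of _ "{..S}"]) (auto simp: K_def)
  moreover have "0 \<in> K" using a by (simp add: K_def)
  ultimately have max_in: "Max K \<in> K" and max_ge: "\<And>k. k \<in> K \<Longrightarrow> k \<le> Max K"
    by (auto intro: Max_in Max_ge)
  have cut: "cut_index S p \<sigma> a = Max K"
    by (simp add: cut_index_def K_def)
  have "(\<Sum>j<S. p (\<sigma> j)) = 1"
    using sum.reindex_bij_betw[OF \<sigma>, of p] p_sum by simp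
  then have "Max K \<noteq> S" using max_in a by (auto simp: K_def)
  then show less: "cut_index S p \<sigma> a < S"
    using max_in cut by (simp add: K_def)
  show "(\<Sum>j<cut_index S p \<sigma> a. p (\<sigma> j)) < a"
    using max_in cut by (simp add: K_def)
  have "Suc (Max K) \<notin> K" using max_ge by fastforce
  then show "a \<le> (\<Sum>j<Suc (cut_index S p \<sigma> a). p (\<sigma> j))"
    using less cut by (simp add: K_def)
qed

lemma tail_weight_bounds:
  assumes "j < S"
  shows "0 \<le> tail_weight S p \<sigma> a j \<and> tail_weight S p \<sigma> a j \<le> p (\<sigma> j)"
proof -
  have "\<sigma> j < S" using \<sigma> assms by (auto dest: bij_betwE)
  then show ?thesis
    using cut_index_bounds p_nonneg by (auto simp: tail_weight_def cut_eps_def)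
qed

lemma sum_tail_weight_mult:
  "(\<Sum>j<S. tail_weight S p \<sigma> a j * c j)
     = (\<Sum>j<cut_index S p \<sigma> a. p (\<sigma> j) * c j) + cut_eps S p \<sigma> a * c (cut_index S p \<sigma> a)"
proof -
  let ?k = "cut_index S p \<sigma> a"
  have "(\<Sum>j<S. tail_weight S p \<sigma> a j * c j) = (\<Sum>j<Suc ?k. tail_weight S p \<sigma> a j * c j)"
    using cut_index_bounds(1) by (intro sum.mono_neutral_right) (auto simp: tail_weight_def)
  also have "\<dots> = (\<Sum>j<?k. p (\<sigma> j) * c j) + cut_eps S p \<sigma> a * c ?k"
    by (simp add: tail_weight_def)
  finally show ?thesis .
qed

lemma cut_eps_le: "cut_eps S p \<sigma> a \<le> a"
proof -
  have "\<sigma> j < S" if "j < cut_index S p \<sigma> a" for j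
    using that cut_index_bounds(1) \<sigma> by (auto dest: bij_betwE)
  then have "0 \<le> (\<Sum>j<cut_index S p \<sigma> a. p (\<sigma> j))"
    using p_nonneg by (intro sum_nonneg) auto
  then show ?thesis by (simp add: cut_eps_def)
qed

lemma sum_tail_weight: "(\<Sum>j<S. tail_weight S p \<sigma> a j) = a"
  using sum_tail_weight_mult[of "\<lambda>_. 1"] by (simp add: cut_eps_def)

end

lemma CVaR_eq_CVaR_perm:
  assumes "\<forall>j<S. 0 \<le> p j" "(\<Sum>j<S. p j) = 1" "0 < a" "a < 1"
  shows "CVaR S x p a v = CVaR_perm S x p (SOME \<sigma>. sorting_perm S x v \<sigma>) a v"
proof -
  let ?\<sigma> = "SOME \<sigma>. sorting_perm S x v \<sigma>"
  show ?thesis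
    using sum_tail_weight_mult[OF assms(1,2) sorting_perm_bij[OF sorting_perm_some[of S x v]] assms(3,4),
        of "\<lambda>j. v \<bullet> x (?\<sigma> j)"]
    by (simp add: CVaR_def CVaR_perm_def Let_def algebra_simps add_divide_distrib)
qed

lemma CVaR_perm_sorting_le:
  assumes p: "\<forall>j<S. 0 \<le> p j" "(\<Sum>j<S. p j) = 1" and a: "0 < a" "a < 1"
    and sorted: "sorting_perm S x v \<sigma>" and \<tau>: "bij_betw \<tau> {..<S} {..<S}"
  shows "CVaR_perm S x p \<sigma> a v \<le> CVaR_perm S x p \<tau> a v"
proof -
  have \<sigma>: "bij_betw \<sigma> {..<S} {..<S}"
    and mono: "\<And>i j. i \<le> j \<Longrightarrow> j < S \<Longrightarrow> v \<bullet> x (\<sigma> i) \<le> v \<bullet> x (\<sigma> j)"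
    using sorted by (auto simp: sorting_perm_def)
  let ?\<iota> = "inv_into {..<S} \<tau>"
  \<comment> \<open>the weight that \<open>\<tau>\<close> puts on scenario \<open>\<sigma> j\<close>\<close>
  define R where "R j = tail_weight S p \<tau> a (?\<iota> (\<sigma> j))" for j
  have R_bounds: "0 \<le> R j \<and> R j \<le> p (\<sigma> j)" if j: "j < S" for j
  proof -
    have "\<sigma> j < S" using \<sigma> j by (auto dest: bij_betwE)
    then have "?\<iota> (\<sigma> j) < S" and "\<tau> (?\<iota> (\<sigma> j)) = \<sigma> j"
      using bij_betw_inv_into[OF \<tau>] bij_betw_inv_into_right[OF \<tau>] by (auto dest: bij_betwE)
    then show ?thesis
      using tail_weight_bounds[OF p \<tau> a, of "?\<iota> (\<sigma> j)"] by (simp add: R_def)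
  qed
  have "(\<Sum>j<S. R j) = (\<Sum>j<S. tail_weight S p \<sigma> a j)"
    using sum_reindex_bij_pair[OF \<sigma> \<tau>, of "\<lambda>j i. tail_weight S p \<tau> a j"]
    by (simp add: R_def sum_tail_weight[OF p \<tau> a] sum_tail_weight[OF p \<sigma> a])
  then have "(\<Sum>j<S. tail_weight S p \<sigma> a j * (v \<bullet> x (\<sigma> j))) \<le> (\<Sum>j<S. R j * (v \<bullet> x (\<sigma> j)))"
    using cut_index_bounds(1)[OF p \<sigma> a] R_bounds mono
    by (intro greedy_weighted_sum_le[where k = "cut_index S p \<sigma> a" and P = "\<lambda>j. p (\<sigma> j)"])
      (auto simp: tail_weight_def)
  also have "\<dots> = (\<Sum>j<S. tail_weight S p \<tau> a j * (v \<bullet> x (\<tau> j)))"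
    using sum_reindex_bij_pair[OF \<sigma> \<tau>, of "\<lambda>j i. tail_weight S p \<tau> a j * (v \<bullet> x i)"]
    by (simp add: R_def)
  finally show ?thesis
    using a by (simp add: CVaR_perm_def divide_right_mono)
qed

lemma concave_on_CVaR:
  fixes x :: "nat \<Rightarrow> real^'n"
  assumes p: "\<forall>j<S. 0 \<le> p j" "(\<Sum>j<S. p j) = 1" and a: "0 < a" "a < 1"
  shows "concave_on UNIV (CVaR S x p a)"
  unfolding concave_on_iff
proof (intro conjI ballI allI impI convex_UNIV)
  fix v w :: "real^'n" and s t :: real
  assume "0 \<le> s" "0 \<le> t" "s + t = 1"
  define \<sigma> where "\<sigma> = (SOME \<sigma>. sorting_perm S x (s *\<^sub>R v + t *\<^sub>R w) \<sigma>)"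
  have "bij_betw \<sigma> {..<S} {..<S}"
    unfolding \<sigma>_def by (rule sorting_perm_bij[OF sorting_perm_some])
  then have "CVaR S x p a v \<le> CVaR_perm S x p \<sigma> a v" "CVaR S x p a w \<le> CVaR_perm S x p \<sigma> a w"
    using CVaR_perm_sorting_le[OF p a sorting_perm_some] CVaR_eq_CVaR_perm[OF p a] by metis+
  then have "s * CVaR S x p a v + t * CVaR S x p a w \<le> CVaR_perm S x p \<sigma> a (s *\<^sub>R v + t *\<^sub>R w)"
    using \<open>0 \<le> s\<close> \<open>0 \<le> t\<close> by (simp add: CVaR_perm_combination add_mono mult_left_mono)
  also have "\<dots> = CVaR S x p a (s *\<^sub>R v + t *\<^sub>R w)"
    using CVaR_eq_CVaR_perm[OF p a, of x "s *\<^sub>R v + t *\<^sub>R w"] by (simp add: \<sigma>_def)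
  finally show "s * CVaR S x p a v + t * CVaR S x p a w \<le> CVaR S x p a (s *\<^sub>R v + t *\<^sub>R w)" .
qed

section \<open>Convergence of BDCA\<close>

text \<open>The convergence argument only uses that \<open>G\<close> and \<open>H\<close> are \<open>\<rho>\<close>-strongly convex.\<close>
locale bdca =
  fixes G H \<Phi> :: "real^'n \<Rightarrow> real" and \<rho> \<beta> :: real
    and w y u :: "nat \<Rightarrow> real^'n" and lam :: "nat \<Rightarrow> real"
  assumes Phi_eq: "\<And>v. \<Phi> v = G v - H v"
    and rho_pos: "0 < \<rho>" and beta: "0 < \<beta>" "\<beta> < 1"
    and G_strongly_convex: "strongly_convex \<rho> G"
    and H_strongly_convex: "strongly_convex \<rho> H"
    and w0: "w 0 \<in> port_simplex"
    and u_sub: "\<forall>k. u k \<in> subdiff H (w k)"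
    and y_min: "\<forall>k. y k \<in> port_simplex \<and> (\<forall>v\<in>port_simplex. G (y k) - y k \<bullet> u k \<le> G v - v \<bullet> u k)"
    and stop: "\<forall>k. y k = w k \<longrightarrow> w (Suc k) = w k"
    and step: "\<forall>k. y k \<noteq> w k \<longrightarrow>
        lam k = ls_iter \<beta> (ls_init (w k) (y k - w k))
                  (LEAST m. \<Phi> (w k + ls_iter \<beta> (ls_init (w k) (y k - w k)) m *\<^sub>R (y k - w k))
                      \<le> \<Phi> (w k) - \<rho> * (ls_iter \<beta> (ls_init (w k) (y k - w k)) m)^2 * (norm (y k - w k))^2)
        \<and> w (Suc k) = w k + lam k *\<^sub>R (y k - w k)"
begin

abbreviation trial :: "nat \<Rightarrow> nat \<Rightarrow> real" where
  "trial k m \<equiv> ls_iter \<beta> (ls_init (w k) (y k - w k)) m"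

abbreviation armijo :: "nat \<Rightarrow> nat \<Rightarrow> bool" where
  "armijo k m \<equiv>
     \<Phi> (w k + trial k m *\<^sub>R (y k - w k)) \<le> \<Phi> (w k) - \<rho> * (trial k m)\<^sup>2 * (norm (y k - w k))\<^sup>2"

lemma step_eq:
  assumes "y k \<noteq> w k"
  shows "lam k = trial k (LEAST m. armijo k m)" and "w (Suc k) = w k + lam k *\<^sub>R (y k - w k)"
  using step assms by blast+

lemma y_in_simplex: "y k \<in> port_simplex"
  using y_min by blast

lemma trial_bounds:
  assumes "w k \<in> port_simplex" "y k \<noteq> w k"
  shows "1 \<le> trial k m" and "trial k m \<le> ls_init (w k) (y k - w k)"
  using ls_iter_bounds[OF _ _ ls_init_feasible(2)[OF assms(1) y_in_simplex assms(2)]] beta by auto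

lemma w_in_simplex: "w k \<in> port_simplex"
proof (induction k)
  case 0
  show ?case by (rule w0)
next
  case (Suc k)
  show ?case
  proof (cases "y k = w k")
    case True
    then show ?thesis using stop Suc by simp
  next
    case False
    show ?thesis
      unfolding step_eq[OF False]
      by (rule convex_step_shorten[OF convex_port_simplex Suc ls_init_feasible(1)[OF Suc y_in_simplex False]])
        (use trial_bounds[OF Suc False] in \<open>auto intro: order_trans[OF zero_le_one]\<close>)
  qed
qed

lemma descent_at_y: "\<Phi> (y k) \<le> \<Phi> (w k) - \<rho> * (norm (y k - w k))\<^sup>2"
proof -
  have "H (w k) + u k \<bullet> (y k - w k) + \<rho> / 2 * (norm (y k - w k))\<^sup>2 \<le> H (y k)"
    using strongly_convex_subdiff_growth[OF H_strongly_convex] u_sub by blast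
  moreover have "G (y k) + y k \<bullet> - u k + \<rho> / 2 * (norm (w k - y k))\<^sup>2 \<le> G (w k) + w k \<bullet> - u k"
  proof (rule strongly_convex_argmin_growth[OF strongly_convex_add_inner[OF G_strongly_convex]
        convex_port_simplex y_in_simplex w_in_simplex])
    fix v :: "real^'n" assume "v \<in> port_simplex"
    then show "G (y k) + y k \<bullet> - u k \<le> G v + v \<bullet> - u k" using y_min by simp
  qed
  moreover have "u k \<bullet> (y k - w k) = y k \<bullet> u k - w k \<bullet> u k"
    by (simp add: inner_diff_right inner_commute)
  moreover have "norm (w k - y k) = norm (y k - w k)"
    by (rule norm_minus_commute)
  ultimately show ?thesis
    unfolding Phi_eq by simp
qed

lemma armijo_exists:
  assumes "y k \<noteq> w k"
  shows "\<exists>m. armijo k m"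
proof -
  obtain m where "trial k m = 1"
    using ls_iter_reaches_1[OF beta ls_init_feasible(2)[OF w_in_simplex y_in_simplex assms]] .
  then show ?thesis
    using descent_at_y[of k] by (intro exI[of _ m]) simp
qed

lemma descent_at_w:
  assumes "y k \<noteq> w k"
  shows "\<Phi> (w (Suc k)) \<le> \<Phi> (w k) - \<rho> * (lam k)\<^sup>2 * (norm (y k - w k))\<^sup>2"
  using LeastI_ex[OF armijo_exists[OF assms]] unfolding step_eq[OF assms] .

lemma sufficient_decrease: "\<rho> * (norm (y k - w k))\<^sup>2 \<le> \<Phi> (w k) - \<Phi> (w (Suc k))"
proof (cases "y k = w k")
  case True
  then show ?thesis using stop by simp
next
  case False
  then have "1 \<le> lam k"
    unfolding step_eq[OF False] by (rule trial_bounds(1)[OF w_in_simplex])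
  then have "(norm (y k - w k))\<^sup>2 \<le> (lam k)\<^sup>2 * (norm (y k - w k))\<^sup>2"
    using mult_right_mono[of 1 "(lam k)\<^sup>2" "(norm (y k - w k))\<^sup>2"] by (simp add: one_le_power)
  then have "\<rho> * (norm (y k - w k))\<^sup>2 \<le> \<rho> * ((lam k)\<^sup>2 * (norm (y k - w k))\<^sup>2)"
    using rho_pos by (intro mult_left_mono) auto
  then show ?thesis
    using descent_at_w[OF False] by (simp add: mult.assoc)
qed

lemma decseq_Phi: "decseq (\<lambda>k. \<Phi> (w k))"
proof (rule decseq_SucI)
  fix k
  have "0 \<le> \<rho> * (norm (y k - w k))\<^sup>2" using rho_pos by simp
  then show "\<Phi> (w (Suc k)) \<le> \<Phi> (w k)" using sufficient_decrease[of k] by linarith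
qed

lemma continuous_on_Phi: "continuous_on UNIV \<Phi>"
  using strongly_convex_continuous_on[OF G_strongly_convex] strongly_convex_continuous_on[OF H_strongly_convex]
  by (simp add: Phi_eq[abs_def] continuous_on_diff)

lemma Phi_convergent: "\<exists>\<phi>. (\<lambda>k. \<Phi> (w k)) \<longlonglongrightarrow> \<phi>"
proof -
  have "port_simplex \<noteq> ({} :: (real^'n) set)"
    using axis_in_port_simplex by blast
  then obtain z where "\<forall>v\<in>port_simplex. \<Phi> z \<le> \<Phi> v"
    using continuous_attains_inf[OF compact_port_simplex _ continuous_on_subset[OF continuous_on_Phi subset_UNIV]]
    by blast
  then have "\<forall>k. \<Phi> z \<le> \<Phi> (w k)"
    using w_in_simplex by blast
  then show ?thesis
    using decseq_convergent[OF decseq_Phi] by blast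
qed

lemma direction_tendsto_0: "(\<lambda>k. y k - w k) \<longlonglongrightarrow> 0"
proof -
  obtain \<phi> where \<phi>: "(\<lambda>k. \<Phi> (w k)) \<longlonglongrightarrow> \<phi>"
    using Phi_convergent by blast
  have "(\<lambda>k. (\<Phi> (w k) - \<Phi> (w (Suc k))) / \<rho>) \<longlonglongrightarrow> (\<phi> - \<phi>) / \<rho>"
    by (rule tendsto_divide[OF tendsto_diff[OF \<phi> LIMSEQ_Suc[OF \<phi>]] tendsto_const]) (use rho_pos in simp)
  then have lim: "(\<lambda>k. (\<Phi> (w k) - \<Phi> (w (Suc k))) / \<rho>) \<longlonglongrightarrow> 0"
    by simp
  have "(\<lambda>k. (norm (y k - w k))\<^sup>2) \<longlonglongrightarrow> 0"
  proof (rule tendsto_sandwich[OF _ _ tendsto_const lim])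
    show "\<forall>\<^sub>F k in sequentially. 0 \<le> (norm (y k - w k))\<^sup>2"
      by simp
    show "\<forall>\<^sub>F k in sequentially. (norm (y k - w k))\<^sup>2 \<le> (\<Phi> (w k) - \<Phi> (w (Suc k))) / \<rho>"
      using sufficient_decrease rho_pos by (simp add: pos_le_divide_eq mult.commute)
  qed
  then have "(\<lambda>k. sqrt ((norm (y k - w k))\<^sup>2)) \<longlonglongrightarrow> sqrt 0"
    by (rule tendsto_real_sqrt)
  then show ?thesis
    by (simp add: tendsto_norm_zero_iff)
qed

lemma subgradients_bounded: "\<exists>M. \<forall>k. norm (u k) \<le> M"
proof -
  have "bounded (H ` cball 0 2)"
    using strongly_convex_continuous_on[OF H_strongly_convex]
    by (intro compact_imp_bounded compact_continuous_image) (auto intro: continuous_on_subset)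
  then have "\<exists>M. \<forall>v\<in>cball 0 2. \<bar>H v\<bar> \<le> M"
    unfolding bounded_iff by simp
  then obtain M where M: "\<And>v. v \<in> cball 0 2 \<Longrightarrow> \<bar>H v\<bar> \<le> M" by blast
  have ball_sub: "cball (w k) 1 \<subseteq> cball 0 2" for k
  proof
    fix v assume "v \<in> cball (w k) 1"
    then show "v \<in> cball 0 2"
      using norm_triangle_sub[of v "w k"] norm_le_1_if_port_simplex[OF w_in_simplex, of k]
      by (simp add: dist_norm norm_minus_commute)
  qed
  have "norm (u k) \<le> 2 * M" for k
  proof (rule norm_subdiff_le)
    show "u k \<in> subdiff H (w k)" using u_sub by blast
    fix v assume "v \<in> cball (w k) 1"
    then show "\<bar>H v\<bar> \<le> M" using M ball_sub by blast
  qed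
  then show ?thesis by blast
qed

lemma limit_point_is_KKT:
  assumes r: "strict_mono r" and wr: "(w \<circ> r) \<longlonglongrightarrow> z" and ur: "(u \<circ> r) \<longlonglongrightarrow> ub"
  shows "is_KKT G H z"
proof (rule is_KKT_if_subproblem_argmin)
  show "convex_on UNIV G"
    using rho_pos G_strongly_convex by (intro strongly_convex_imp_convex_on) auto
  show z: "z \<in> port_simplex"
    using closed_sequentially[OF closed_port_simplex _ wr] w_in_simplex by simp
  have yr: "(y \<circ> r) \<longlonglongrightarrow> z"
    using tendsto_add[OF wr LIMSEQ_subseq_LIMSEQ[OF direction_tendsto_0 r]] by (simp add: comp_def)
  have H_cont: "isCont H z"
    using strongly_convex_continuous_on[OF H_strongly_convex] by (simp add: continuous_on_eq_continuous_at)
  have G_cont: "isCont G z"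
    using strongly_convex_continuous_on[OF G_strongly_convex] by (simp add: continuous_on_eq_continuous_at)
  show "ub \<in> subdiff H z"
    unfolding subdiff_def
  proof (intro CollectI allI)
    fix v
    have "(\<lambda>k. H ((w \<circ> r) k) + (u \<circ> r) k \<bullet> (v - (w \<circ> r) k)) \<longlonglongrightarrow> H z + ub \<bullet> (v - z)"
      by (intro tendsto_intros isCont_tendsto_compose[OF H_cont] wr ur)
    then show "H z + ub \<bullet> (v - z) \<le> H v"
      by (rule LIMSEQ_le_const2) (use u_sub in \<open>auto simp: subdiff_def\<close>)
  qed
  fix v :: "real^'n" assume "v \<in> port_simplex"
  have "(\<lambda>k. G ((y \<circ> r) k) - (y \<circ> r) k \<bullet> (u \<circ> r) k) \<longlonglongrightarrow> G z - z \<bullet> ub"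
    by (intro tendsto_intros isCont_tendsto_compose[OF G_cont] yr ur)
  moreover have "(\<lambda>k. G v - v \<bullet> (u \<circ> r) k) \<longlonglongrightarrow> G v - v \<bullet> ub"
    by (intro tendsto_intros ur)
  ultimately show "G z - z \<bullet> ub \<le> G v - v \<bullet> ub"
    by (rule LIMSEQ_le) (use y_min \<open>v \<in> port_simplex\<close> in auto)
qed

lemma KKT_subsequence: "\<exists>r z. strict_mono r \<and> (w \<circ> r) \<longlonglongrightarrow> z \<and> is_KKT G H z"
proof -
  obtain M where "\<forall>k. norm (u k) \<le> M" using subgradients_bounded by blast
  then have bounded: "\<forall>k. (w k, u k) \<in> port_simplex \<times> cball 0 M"
    using w_in_simplex by simp
  have "compact (port_simplex \<times> cball (0::real^'n) M)"
    by (intro compact_Times compact_port_simplex compact_cball)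
  then obtain l r where "strict_mono r" and lim: "((\<lambda>k. (w k, u k)) \<circ> r) \<longlonglongrightarrow> l"
    using seq_compactE[OF compact_imp_seq_compact bounded] by blast
  moreover have "(w \<circ> r) \<longlonglongrightarrow> fst l" "(u \<circ> r) \<longlonglongrightarrow> snd l"
    using tendsto_fst[OF lim] tendsto_snd[OF lim] by (simp_all add: comp_def)
  ultimately show ?thesis
    using limit_point_is_KKT by blast
qed

end

section \<open>The VaR problem\<close>

lemma f_obj_eq_inner: "f_obj S x p v = v \<bullet> - (\<Sum>j<S. p j *\<^sub>R x j)"
  by (simp add: f_obj_def inner_sum_right)

lemma convex_on_nonpos_mult_CVaR:
  assumes "\<forall>j<S. 0 \<le> p j" "(\<Sum>j<S. p j) = 1" "0 < a" "a < 1" "c \<le> 0"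
  shows "convex_on UNIV (\<lambda>v. c * CVaR S x p a v)"
  using assms by (intro convex_on_cmul_concave concave_on_CVaR)

lemma strongly_convex_g_dc:
  assumes p: "\<forall>j<S. 0 \<le> p j" "(\<Sum>j<S. p j) = 1"
    and "0 < \<alpha> - \<gamma>" "\<alpha> < 1" "0 < \<gamma>" "0 \<le> \<tau>"
  shows "strongly_convex \<rho> (g_dc S x p \<alpha> \<gamma> rmin \<tau> \<rho>)"
proof -
  have tail_\<alpha>: "convex_on UNIV (\<lambda>v. - (\<alpha> / \<gamma>) * CVaR S x p \<alpha> v + rmin)"
    using assms by (intro convex_on_add convex_on_nonpos_mult_CVaR[OF p]) (simp_all add: convex_on_const)
  have tail_\<alpha>\<gamma>: "convex_on UNIV (\<lambda>v. - ((\<alpha> - \<gamma>) / \<gamma>) * CVaR S x p (\<alpha> - \<gamma>) v)"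
    using assms by (intro convex_on_nonpos_mult_CVaR[OF p]) simp_all
  have "convex_on UNIV (\<lambda>v. f_obj S x p v + \<tau> * max (- (\<alpha> / \<gamma>) * CVaR S x p \<alpha> v + rmin)
                (- ((\<alpha> - \<gamma>) / \<gamma>) * CVaR S x p (\<alpha> - \<gamma>) v))"
    unfolding f_obj_eq_inner using assms
    by (intro convex_on_add convex_on_inner_left convex_on_cmul convex_on_max[OF tail_\<alpha> tail_\<alpha>\<gamma>]) simp
  then show ?thesis
    by (simp add: strongly_convex_def g_dc_def psi_def)
qed

lemma strongly_convex_h_dc:
  assumes p: "\<forall>j<S. 0 \<le> p j" "(\<Sum>j<S. p j) = 1"
    and "0 < \<alpha> - \<gamma>" "\<alpha> - \<gamma> < 1" "0 < \<gamma>" "0 \<le> \<tau>"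
  shows "strongly_convex \<rho> (h_dc S x p \<alpha> \<gamma> \<tau> \<rho>)"
proof -
  have "convex_on UNIV (\<lambda>v. - (\<tau> * ((\<alpha> - \<gamma>) / \<gamma>)) * CVaR S x p (\<alpha> - \<gamma>) v)"
    using assms by (intro convex_on_nonpos_mult_CVaR[OF p]) simp_all
  then show ?thesis
    by (simp add: strongly_convex_def h_dc_def psi_def)
qed

theorem theorem1:
  fixes S :: nat and x :: "nat \<Rightarrow> real^'n" and p :: "nat \<Rightarrow> real"
    and \<alpha> \<gamma> rmin \<tau> \<rho> \<beta> :: real
    and w y u :: "nat \<Rightarrow> real^'n" and lam :: "nat \<Rightarrow> real"
    and G H \<Phi> :: "real^'n \<Rightarrow> real"
  defines "G \<equiv> g_dc S x p \<alpha> \<gamma> rmin \<tau> \<rho>"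
    and "H \<equiv> h_dc S x p \<alpha> \<gamma> \<tau> \<rho>"
    and "\<Phi> \<equiv> (\<lambda>v. G v - H v)"
  assumes p_range: "\<forall>j<S. 0 \<le> p j \<and> p j \<le> 1"
    and p_sum: "(\<Sum>j<S. p j) = 1"
    and alpha: "0 < \<alpha>" "\<alpha> < 1"
    and gamma: "0 < \<gamma>"
      "\<forall>v\<in>port_simplex. \<forall>\<sigma>. sorting_perm S x v \<sigma> \<longrightarrow> \<gamma> < cut_eps S p \<sigma> \<alpha>"
    and params: "0 < \<tau>" "0 < \<rho>" "0 < \<beta>" "\<beta> < 1"
    and w0: "w 0 \<in> port_simplex"
    and u_sub: "\<forall>k. u k \<in> subdiff H (w k)"
    and y_min: "\<forall>k. y k \<in> port_simplex \<and> (\<forall>v\<in>port_simplex. G (y k) - y k \<bullet> u k \<le> G v - v \<bullet> u k)"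
    and stop: "\<forall>k. y k = w k \<longrightarrow> w (Suc k) = w k"
    and step: "\<forall>k. y k \<noteq> w k \<longrightarrow>
        lam k = ls_iter \<beta> (ls_init (w k) (y k - w k))
                  (LEAST m. \<Phi> (w k + ls_iter \<beta> (ls_init (w k) (y k - w k)) m *\<^sub>R (y k - w k))
                      \<le> \<Phi> (w k) - \<rho> * (ls_iter \<beta> (ls_init (w k) (y k - w k)) m)^2 * (norm (y k - w k))^2)
        \<and> w (Suc k) = w k + lam k *\<^sub>R (y k - w k)"
  shows "(\<forall>k. \<Phi> (y k) \<le> \<Phi> (w k) - \<rho> * (norm (y k - w k))^2)
    \<and> (\<forall>k. y k \<noteq> w k \<longrightarrow>
          (\<exists>m. \<Phi> (w k + ls_iter \<beta> (ls_init (w k) (y k - w k)) m *\<^sub>R (y k - w k))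
                \<le> \<Phi> (w k) - \<rho> * (ls_iter \<beta> (ls_init (w k) (y k - w k)) m)^2 * (norm (y k - w k))^2)
          \<and> \<Phi> (w (Suc k)) \<le> \<Phi> (w k) - \<rho> * (lam k)^2 * (norm (y k - w k))^2)
    \<and> decseq (\<lambda>k. \<Phi> (w k)) \<and> (\<exists>\<phi>b. (\<lambda>k. \<Phi> (w k)) \<longlonglongrightarrow> \<phi>b)
    \<and> (\<exists>r wb. strict_mono r \<and> (w \<circ> r) \<longlonglongrightarrow> wb \<and> is_KKT G H wb)"
proof -
  have p: "\<forall>j<S. 0 \<le> p j" "(\<Sum>j<S. p j) = 1"
    using p_range p_sum by auto
  obtain v :: "real^'n" and \<sigma> where "v \<in> port_simplex" and "sorting_perm S x v \<sigma>"
    using axis_in_port_simplex sorting_perm_exists by blast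
  then have "\<gamma> < \<alpha>"
    using gamma(2) cut_eps_le[OF p sorting_perm_bij alpha] by fastforce
  then have \<alpha>\<gamma>: "0 < \<alpha> - \<gamma>" "\<alpha> - \<gamma> < 1"
    using alpha gamma(1) by auto
  have "strongly_convex \<rho> G"
    unfolding G_def using \<alpha>\<gamma> alpha gamma(1) params(1) by (intro strongly_convex_g_dc[OF p]) auto
  moreover have "strongly_convex \<rho> H"
    unfolding H_def using \<alpha>\<gamma> gamma(1) params(1) by (intro strongly_convex_h_dc[OF p]) auto
  ultimately interpret bdca G H \<Phi> \<rho> \<beta> w y u lam
    using params w0 u_sub y_min stop step by unfold_locales (simp_all add: \<Phi>_def)
  show ?thesis
    using descent_at_y armijo_exists descent_at_w decseq_Phi Phi_convergent KKT_subsequence by blast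
qed


end
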